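(* For a multi-parameter family $\rho(\theta)=\sum_{k=1}^d p_k(\theta)|w_k(\theta)\rangle\langle w_k(\theta)|$ with a chosen smooth spectral decomposition as in the context, equality $H_{SLD}(\theta)=C_L(\theta)$ (as matrices) holds at $\theta$ if and only if $$\langle w_j^{(m)}(\theta)|w_k(\theta)\rangle=0\quad\text{for all } m\in\{1,\dots,p\}\text{ and all } j\neq k \text{ with } p_j(\theta)>0,\ p_k(\theta)>0.$$
   Context: Let $\Theta\subseteq\mathbb{R}^p$ be open and $\rho(\theta)=\sum_{k=1}^d p_k(\theta)|w_k(\theta)\rangle\langle w_k(\theta)|$, where $p_k:\Theta\to[0,1]$ are smooth with $\sum_k p_k=1$ and $|w_1(\theta)\rangle,\dots,|w_d(\theta)\rangle$ is an orthonormal basis of $\mathbb{C}^d$ depending smoothly on $\theta$. Write $|w_k^{(l)}\rangle=\frac{\partial}{\partial\theta^l}|w_k(\theta)\rangle$. Convention: indices $i$ with $p_i(\theta)=0$ are omitted from sums containing $1/p_i$. The $C_L$ quantum information is the $p\times p$ matrix $$C_L(\theta)_{kl}=\sum_i\frac{1}{p_i}\frac{\partial p_i}{\partial\theta^k}\frac{\partial p_i}{\partial\theta^l}+4\,\Re\sum_{i<j}(p_i+p_j)\langle w_i^{(k)}|w_j\rangle\langle w_j|w_i^{(l)}\rangle.$$ The SLD quantum information matrix is $H_{SLD}(\theta)_{kl}=\Re\,\mathrm{tr}\{\rho(\theta)\lambda_k(\theta)\lambda_l(\theta)\}$, where $\lambda_k(\theta)$ is any Hermitian solution of $\frac{\partial\rho}{\partial\theta^k}=\frac12(\rho\lambda_k+\lambda_k\rho)$.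 *)

theory Defs
  imports "HOL-Analysis.Analysis"
begin

definition pderiv_at :: "(real^'p \<Rightarrow> 'b::real_normed_vector) \<Rightarrow> 'p \<Rightarrow> real^'p \<Rightarrow> 'b" where
  "pderiv_at f l x = frechet_derivative f (at x) (axis l 1)"

fun Cn_on :: "nat \<Rightarrow> (real^'p) set \<Rightarrow> (real^'p \<Rightarrow> 'b::real_normed_vector) \<Rightarrow> bool" where
  "Cn_on 0 S f = continuous_on S f"
| "Cn_on (Suc n) S f = (continuous_on S f \<and> (\<forall>x\<in>S. f differentiable (at x))
      \<and> (\<forall>l. Cn_on n S (pderiv_at f l)))"

definition smooth_on :: "(real^'p) set \<Rightarrow> (real^'p \<Rightarrow> 'b::real_normed_vector) \<Rightarrow> bool" where
  "smooth_on S f = (\<forall>n. Cn_on n S f)"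

definition braket :: "complex^'d \<Rightarrow> complex^'d \<Rightarrow> complex" where
  "braket a b = (\<Sum>i\<in>UNIV. cnj (a$i) * b$i)"

definition mtrace :: "complex^'d^'d \<Rightarrow> complex" where
  "mtrace A = (\<Sum>i\<in>UNIV. A$i$i)"

definition hermitian :: "complex^'d^'d \<Rightarrow> bool" where
  "hermitian A = (\<forall>a b. A$a$b = cnj (A$b$a))"

definition dens :: "('d::finite \<Rightarrow> real^'p \<Rightarrow> real) \<Rightarrow> ('d \<Rightarrow> real^'p \<Rightarrow> complex^'d)
    \<Rightarrow> real^'p \<Rightarrow> complex^'d^'d" where
  "dens pr w x = (\<chi> a b. \<Sum>k\<in>UNIV. complex_of_real (pr k x) * (w k x)$a * cnj ((w k x)$b))"

definition CL_info :: "('d::{finite,linorder} \<Rightarrow> real^'p \<Rightarrow> real) \<Rightarrow> ('d \<Rightarrow> real^'p \<Rightarrow> (complex, 'd::{finite,linorder}) vec)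
    \<Rightarrow> real^'p \<Rightarrow> 'p \<Rightarrow> 'p \<Rightarrow> real" where
  "CL_info pr w x k l =
     (\<Sum>i\<in>{i. pr i x \<noteq> 0}. (1 / pr i x) * pderiv_at (pr i) k x * pderiv_at (pr i) l x)
     + 4 * Re (\<Sum>(i,j)\<in>{(i,j). i < j}.
          complex_of_real (pr i x + pr j x)
          * braket (pderiv_at (w i) k x) (w j x) * braket (w j x) (pderiv_at (w i) l x))"

definition SLD_info :: "complex^'d^'d \<Rightarrow> ('p \<Rightarrow> complex^'d^'d) \<Rightarrow> 'p \<Rightarrow> 'p \<Rightarrow> real" where
  "SLD_info r lam k l = Re (mtrace (r ** lam k ** lam l))"

definition is_SLD_family :: "(real^'p \<Rightarrow> complex^'d^'d) \<Rightarrow> real^'p \<Rightarrow> ('p \<Rightarrow> complex^'d^'d) \<Rightarrow> bool" where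
  "is_SLD_family rho x lam = (\<forall>k. hermitian (lam k) \<and>
      pderiv_at rho k x = (1/2::real) *\<^sub>R (rho x ** lam k + lam k ** rho x))"

end

theory Submission
  imports Defs
begin

text \<open>
  Everything is computed in the eigenbasis v_a = w_a(theta) of rho(theta).  Write
  L^k_ab = <v_a| lambda_k v_b> for the matrix elements of the SLDs and
  B^m_ab = <d_m w_a | v_b>; differentiating orthonormality shows that B^m is
  anti-Hermitian.  Then:
  (1) the matrix elements of d_m rho are delta_ab d_m p_a + (p_a - p_b) B^m_ab, so the
      SLD equation reads (p_a + p_b)/2 L^m_ab = delta_ab d_m p_a + (p_a - p_b) B^m_ab;
  (2) H_SLD = Re sum_ab p_a L^k_ab L^l_ba, and splitting into diagonal terms and pairs
      a < b gives the classical Fisher part plus 4 (p_a - p_b)^2/(p_a + p_b) Re(B^k_ab conj B^l_ab);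
  (3) hence C_L - H_SLD = 16 sum_{a<b} p_a p_b/(p_a + p_b) Re(B^k_ab conj B^l_ab), a Gram-type
      form with nonnegative weights, which vanishes for all k, l exactly when B^m_ab = 0
      whenever p_a, p_b > 0.
  The file first develops bra-ket algebra for sums of ket-bras, then matrix elements in an
  orthonormal basis, then the derivatives of rho, then the purely algebraic core (3),
  and finally assembles the theorem.
\<close>

section \<open>Bra-ket algebra and sums of ket-bras\<close>

lemma braket_cnj: "braket y x = cnj (braket x y)"
  by (simp add: braket_def mult.commute)

lemma braket_add_right: "braket u (x + y) = braket u x + braket u y"
  by (simp add: braket_def sum.distrib distrib_left)

lemma braket_scaleR_matrix:
  "braket u (((r::real) *\<^sub>R M) *v z) = complex_of_real r * braket u (M *v z)"
  unfolding braket_def matrix_vector_mult_def vector_scaleR_component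
  by (simp add: sum_distrib_left scaleR_conv_of_real mult_ac)

lemma braket_sum_right:
  fixes x :: "'k \<Rightarrow> complex^'d"
  assumes "finite K"
  shows "braket u (\<chi> i. \<Sum>k\<in>K. f k * x k $ i) = (\<Sum>k\<in>K. f k * braket u (x k))"
  unfolding braket_def using assms
  by (simp add: sum_distrib_left mult_ac sum.swap[of _ K])

lemma braket_hermitian:
  assumes "hermitian M"
  shows "braket u (M *v z) = cnj (braket z (M *v u))"
proof -
  have "cnj (M$a$b) = M$b$a" for a b
    using assms unfolding hermitian_def by (metis complex_cnj_cnj)
  then show ?thesis
    unfolding braket_def matrix_vector_mult_def
    by (simp add: sum_distrib_left sum_distrib_right, subst sum.swap) (simp add: mult_ac)
qed

text \<open>The operator sum_k c_k |x_k><y_k|; the density matrix and its derivatives are of this form.\<close>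
definition ketbra_sum :: "('k::finite \<Rightarrow> complex) \<Rightarrow> ('k \<Rightarrow> complex^'d) \<Rightarrow> ('k \<Rightarrow> complex^'d)
    \<Rightarrow> complex^'d^'d" where
  "ketbra_sum c x y = (\<chi> i j. \<Sum>k\<in>UNIV. c k * x k $ i * cnj (y k $ j))"

lemma ketbra_sum_mult_vec:
  "ketbra_sum c x y *v z = (\<chi> i. \<Sum>k\<in>UNIV. (c k * braket (y k) z) * x k $ i)"
  unfolding ketbra_sum_def matrix_vector_mult_def braket_def vec_eq_iff
  by (simp add: sum_distrib_left sum_distrib_right, subst sum.swap) (simp add: mult_ac)

lemma braket_ketbra_sum:
  "braket u (ketbra_sum c x y *v z) = (\<Sum>k\<in>UNIV. c k * braket (y k) z * braket u (x k))"
  unfolding ketbra_sum_mult_vec by (simp add: braket_sum_right)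

lemma matrix_mult_ketbra_sum:
  "M ** ketbra_sum c x y = ketbra_sum c (\<lambda>k. M *v x k) y"
proof -
  have "(\<Sum>m\<in>UNIV. M $ i $ m * (\<Sum>k\<in>UNIV. c k * x k $ m * cnj (y k $ j)))
      = (\<Sum>k\<in>UNIV. c k * (\<Sum>m\<in>UNIV. M $ i $ m * x k $ m) * cnj (y k $ j))" for i j
    unfolding sum_distrib_left sum_distrib_right by (subst sum.swap) (simp add: mult_ac)
  then show ?thesis
    unfolding ketbra_sum_def matrix_matrix_mult_def matrix_vector_mult_def vec_eq_iff by simp
qed

lemma mtrace_mult_commute: "mtrace (A ** B) = mtrace (B ** A)"
  unfolding mtrace_def matrix_matrix_mult_def by (simp, subst sum.swap) (simp add: mult.commute)

lemma mtrace_ketbra_sum: "mtrace (ketbra_sum c x y) = (\<Sum>k\<in>UNIV. c k * braket (y k) (x k))"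
  unfolding mtrace_def ketbra_sum_def braket_def
  by (simp add: sum_distrib_left, subst sum.swap) (simp add: mult_ac)

section \<open>Matrix elements in an orthonormal basis\<close>

definition orthonormal_family :: "('k \<Rightarrow> complex^'d) \<Rightarrow> bool" where
  "orthonormal_family v \<longleftrightarrow> (\<forall>a b. braket (v a) (v b) = (if a = b then 1 else 0))"

lemma braket_ketbra_sum_basis_right:
  assumes "orthonormal_family v"
  shows "braket u (ketbra_sum c x v *v v b) = c b * braket u (x b)"
proof -
  have "braket u (ketbra_sum c x v *v v b) = (\<Sum>k\<in>UNIV. if k = b then c b * braket u (x b) else 0)"
    unfolding braket_ketbra_sum using assms unfolding orthonormal_family_def
    by (intro sum.cong) auto
  then show ?thesis by simp
qed

lemma braket_basis_ketbra_sum_left: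
  assumes "orthonormal_family v"
  shows "braket (v a) (ketbra_sum c v y *v z) = c a * braket (y a) z"
proof -
  have "braket (v a) (ketbra_sum c v y *v z) = (\<Sum>k\<in>UNIV. if k = a then c a * braket (y a) z else 0)"
    unfolding braket_ketbra_sum using assms unfolding orthonormal_family_def
    by (intro sum.cong) auto
  then show ?thesis by simp
qed

lemma orthonormal_basis_resolution_of_identity:
  fixes v :: "'d::finite \<Rightarrow> complex^'d"
  assumes "orthonormal_family v"
  shows "ketbra_sum (\<lambda>_. 1) v v = mat 1"
proof -
  define V :: "complex^'d^'d" where "V = (\<chi> i b. v b $ i)"
  define V' :: "complex^'d^'d" where "V' = (\<chi> b i. cnj (v b $ i))"
  have "V' ** V = mat 1"
    using assms unfolding V_def V'_def matrix_matrix_mult_def mat_def orthonormal_family_def braket_def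
    by (simp add: vec_eq_iff)
  then have "V ** V' = mat 1"
    by (simp add: matrix_left_right_inverse)
  moreover have "V ** V' = ketbra_sum (\<lambda>_. 1) v v"
    unfolding V_def V'_def matrix_matrix_mult_def ketbra_sum_def by simp
  ultimately show ?thesis by simp
qed

lemma matrix_element_SLD_equation:
  assumes "orthonormal_family v"
    and "D = (1/2::real) *\<^sub>R (ketbra_sum (\<lambda>k. complex_of_real (p k)) v v ** M
                              + M ** ketbra_sum (\<lambda>k. complex_of_real (p k)) v v)"
  shows "braket (v a) (D *v v b) = complex_of_real ((p a + p b) / 2) * braket (v a) (M *v v b)"
proof -
  let ?\<rho> = "ketbra_sum (\<lambda>k. complex_of_real (p k)) v v"
  have "braket (v a) ((?\<rho> ** M) *v v b) = complex_of_real (p a) * braket (v a) (M *v v b)"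
    using braket_basis_ketbra_sum_left[OF assms(1)] by (simp flip: matrix_vector_mul_assoc)
  moreover have "braket (v a) ((M ** ?\<rho>) *v v b) = complex_of_real (p b) * braket (v a) (M *v v b)"
    unfolding matrix_mult_ketbra_sum by (rule braket_ketbra_sum_basis_right[OF assms(1)])
  ultimately show ?thesis
    unfolding assms(2) braket_scaleR_matrix matrix_vector_mult_add_rdistrib braket_add_right
    by (simp add: algebra_simps)
qed

lemma matrix_element_ketbra_derivative:
  assumes "orthonormal_family v"
    and skew: "braket (v a) (x b) = - braket (x a) (v b)"
  shows "braket (v a) ((ketbra_sum (\<lambda>k. complex_of_real (dp k)) v v
                       + ketbra_sum (\<lambda>k. complex_of_real (p k)) x v
                       + ketbra_sum (\<lambda>k. complex_of_real (p k)) v x) *v v b)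
       = (if a = b then complex_of_real (dp a) else 0)
         + complex_of_real (p a - p b) * braket (x a) (v b)"
  using assms(1) unfolding matrix_vector_mult_add_rdistrib braket_add_right
  by (simp add: braket_ketbra_sum_basis_right braket_basis_ketbra_sum_left skew
      orthonormal_family_def algebra_simps)

text \<open>tr(rho A B) expanded in an orthonormal eigenbasis of rho, using completeness in the middle.\<close>
lemma trace_in_orthonormal_basis:
  fixes v :: "'d::finite \<Rightarrow> complex^'d"
  assumes "orthonormal_family v"
  shows "mtrace (ketbra_sum c v v ** A ** B)
       = (\<Sum>a\<in>UNIV. \<Sum>b\<in>UNIV. c a * braket (v a) (A *v v b) * braket (v b) (B *v v a))"
proof -
  have "A ** B = (A ** ketbra_sum (\<lambda>_. 1) v v) ** B"
    by (simp add: orthonormal_basis_resolution_of_identity[OF assms])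
  then have AB: "A ** B = ketbra_sum (\<lambda>_. 1) (\<lambda>k. A *v v k) v ** B"
    by (simp only: matrix_mult_ketbra_sum)
  have "mtrace (ketbra_sum c v v ** A ** B) = mtrace ((A ** B) ** ketbra_sum c v v)"
    by (simp only: matrix_mul_assoc[symmetric] mtrace_mult_commute[of "ketbra_sum c v v"])
  also have "\<dots> = (\<Sum>a\<in>UNIV. c a * braket (v a) ((A ** B) *v v a))"
    unfolding matrix_mult_ketbra_sum mtrace_ketbra_sum by (simp add: mult.commute)
  also have "\<dots> = (\<Sum>a\<in>UNIV. \<Sum>b\<in>UNIV. c a * braket (v a) (A *v v b) * braket (v b) (B *v v a))"
    unfolding AB matrix_vector_mul_assoc[symmetric] braket_ketbra_sum
    by (simp add: sum_distrib_left mult_ac)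
  finally show ?thesis .
qed

section \<open>Derivatives\<close>

lemma smooth_on_differentiable: "smooth_on S f \<Longrightarrow> x \<in> S \<Longrightarrow> f differentiable (at x)"
  unfolding smooth_on_def by (metis Cn_on.simps(2))

lemma pderiv_at_eq: "(f has_derivative f') (at x) \<Longrightarrow> pderiv_at f l x = f' (axis l 1)"
  unfolding pderiv_at_def by (metis frechet_derivative_at)

lemma has_derivative_vec_lambda:
  fixes f :: "'i::finite \<Rightarrow> 'a::real_normed_vector \<Rightarrow> 'b::euclidean_space"
  assumes "\<And>i. (f i has_derivative f' i) (at x)"
  shows "((\<lambda>x. \<chi> i. f i x) has_derivative (\<lambda>h. \<chi> i. f' i h)) (at x)"
  apply (subst has_derivative_componentwise_within)
  apply (auto simp: Basis_vec_def inner_axis)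
  apply (rule bounded_linear.has_derivative[OF bounded_linear_inner_left])
  apply (rule assms)
  done

lemma has_derivative_vec_nth:
  "(f has_derivative f') F \<Longrightarrow> ((\<lambda>x. f x $ i) has_derivative (\<lambda>h. f' h $ i)) F"
  by (rule bounded_linear.has_derivative[OF bounded_linear_vec_nth])

lemma has_derivative_braket:
  assumes "(f has_derivative f') (at t)" and "(g has_derivative g') (at t)"
  shows "((\<lambda>x. braket (f x) (g x)) has_derivative
           (\<lambda>h. braket (f' h) (g t) + braket (f t) (g' h))) (at t)"
proof -
  have "((\<lambda>x. \<Sum>i\<in>UNIV. cnj (f x $ i) * g x $ i) has_derivative
      (\<lambda>h. \<Sum>i\<in>UNIV. cnj (f t $ i) * g' h $ i + cnj (f' h $ i) * g t $ i)) (at t)"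
    by (intro has_derivative_sum has_derivative_mult has_derivative_cnj has_derivative_vec_nth assms)
  then show ?thesis
    unfolding braket_def by (simp add: sum.distrib add.commute)
qed

lemma derivative_of_constant_braket:
  assumes "(f has_derivative f') (at t)" and "(g has_derivative g') (at t)"
    and "open S" and "t \<in> S" and "\<And>x. x \<in> S \<Longrightarrow> braket (f x) (g x) = c"
  shows "braket (f' h) (g t) + braket (f t) (g' h) = 0"
proof -
  have "((\<lambda>x. c) has_derivative (\<lambda>h. 0)) (at t within UNIV)"
    by simp
  then have "((\<lambda>x. braket (f x) (g x)) has_derivative (\<lambda>h. 0)) (at t)"
    by (rule has_derivative_transform_within_open[OF _ assms(3,4)]) (use assms(5) in auto)
  then have "(\<lambda>h. braket (f' h) (g t) + braket (f t) (g' h)) = (\<lambda>h. 0)"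
    using has_derivative_unique[OF has_derivative_braket[OF assms(1,2)]] by simp
  then show ?thesis by metis
qed

lemma pderiv_braket_orthonormality:
  assumes "\<And>k. w k differentiable (at t)"
    and "open S" and "t \<in> S"
    and "\<And>x. x \<in> S \<Longrightarrow> braket (w a x) (w b x) = c"
  shows "braket (pderiv_at (w a) m t) (w b t) + braket (w a t) (pderiv_at (w b) m t) = 0"
proof -
  have "(w k has_derivative frechet_derivative (w k) (at t)) (at t)" for k
    using assms(1) by (rule frechet_derivative_works[THEN iffD1])
  from this this show ?thesis
    unfolding pderiv_at_def by (rule derivative_of_constant_braket[OF _ _ assms(2-4)])
qed

lemma dens_as_ketbra_sum:
  "dens pr w x = ketbra_sum (\<lambda>k. complex_of_real (pr k x)) (\<lambda>k. w k x) (\<lambda>k. w k x)"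
  unfolding dens_def ketbra_sum_def ..

lemma has_derivative_dens_entry:
  fixes w :: "'k::finite \<Rightarrow> 'a::real_normed_vector \<Rightarrow> complex^'d" and pr :: "'k \<Rightarrow> 'a \<Rightarrow> real"
  assumes hw: "\<And>k. (w k has_derivative W' k) (at t)"
    and hp: "\<And>k. (pr k has_derivative P' k) (at t)"
  shows "((\<lambda>x. \<Sum>k\<in>UNIV. complex_of_real (pr k x) * w k x $ i * cnj (w k x $ j)) has_derivative
     (\<lambda>h. \<Sum>k\<in>UNIV. complex_of_real (P' k h) * w k t $ i * cnj (w k t $ j)
        + complex_of_real (pr k t) * W' k h $ i * cnj (w k t $ j)
        + complex_of_real (pr k t) * w k t $ i * cnj (W' k h $ j))) (at t)"
proof -
  have hwi: "((\<lambda>x. w k x $ n) has_derivative (\<lambda>h. W' k h $ n)) (at t)" for k n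
    by (rule has_derivative_vec_nth[OF hw])
  show ?thesis
    apply (rule has_derivative_eq_rhs)
     apply (rule has_derivative_sum has_derivative_mult has_derivative_of_real
        has_derivative_cnj hwi hp)+
    apply (simp add: algebra_simps)
    done
qed

lemma has_derivative_dens:
  assumes "\<And>k. (w k has_derivative W' k) (at t)"
    and "\<And>k. (pr k has_derivative P' k) (at t)"
  shows "(dens pr w has_derivative (\<lambda>h.
            ketbra_sum (\<lambda>k. complex_of_real (P' k h)) (\<lambda>k. w k t) (\<lambda>k. w k t)
          + ketbra_sum (\<lambda>k. complex_of_real (pr k t)) (\<lambda>k. W' k h) (\<lambda>k. w k t)
          + ketbra_sum (\<lambda>k. complex_of_real (pr k t)) (\<lambda>k. w k t) (\<lambda>k. W' k h))) (at t)"
    (is "(_ has_derivative ?D) _")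
proof -
  let ?entry = "\<lambda>h i j. \<Sum>k\<in>UNIV. complex_of_real (P' k h) * w k t $ i * cnj (w k t $ j)
        + complex_of_real (pr k t) * W' k h $ i * cnj (w k t $ j)
        + complex_of_real (pr k t) * w k t $ i * cnj (W' k h $ j)"
  have "((\<lambda>x. \<chi> j. \<Sum>k\<in>UNIV. complex_of_real (pr k x) * w k x $ i * cnj (w k x $ j))
          has_derivative (\<lambda>h. \<chi> j. ?entry h i j)) (at t)" for i
    by (intro has_derivative_vec_lambda has_derivative_dens_entry assms)
  then have "(dens pr w has_derivative (\<lambda>h. \<chi> i j. ?entry h i j)) (at t)"
    unfolding dens_def by (rule has_derivative_vec_lambda)
  moreover have "(\<lambda>h. \<chi> i j. ?entry h i j) = ?D"
    by (simp add: ketbra_sum_def sum.distrib vec_eq_iff fun_eq_iff)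
  ultimately show ?thesis by simp
qed

lemma pderiv_dens:
  assumes "\<And>k. w k differentiable (at t)" and "\<And>k. pr k differentiable (at t)"
  shows "pderiv_at (dens pr w) m t
       = ketbra_sum (\<lambda>k. complex_of_real (pderiv_at (pr k) m t)) (\<lambda>k. w k t) (\<lambda>k. w k t)
       + ketbra_sum (\<lambda>k. complex_of_real (pr k t)) (\<lambda>k. pderiv_at (w k) m t) (\<lambda>k. w k t)
       + ketbra_sum (\<lambda>k. complex_of_real (pr k t)) (\<lambda>k. w k t) (\<lambda>k. pderiv_at (w k) m t)"
proof -
  have "(w k has_derivative frechet_derivative (w k) (at t)) (at t)"
    and "(pr k has_derivative frechet_derivative (pr k) (at t)) (at t)" for k
    using assms by (simp_all add: frechet_derivative_works[symmetric])
  from has_derivative_dens[OF this] show ?thesis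
    unfolding pderiv_at_def by (rule pderiv_at_eq[unfolded pderiv_at_def])
qed

section \<open>The algebraic core\<close>

lemma sum_square_diag_pairs:
  fixes F :: "'d::{finite,linorder} \<Rightarrow> 'd \<Rightarrow> 'b::comm_monoid_add"
  shows "(\<Sum>a\<in>UNIV. \<Sum>b\<in>UNIV. F a b)
       = (\<Sum>a\<in>UNIV. F a a) + (\<Sum>(a,b)\<in>{(a,b). a < b}. F a b + F b a)"
proof -
  let ?P = "{(a,b). a < b} :: ('d \<times> 'd) set"
  have split: "(UNIV :: ('d \<times> 'd) set) = (\<lambda>a. (a,a)) ` UNIV \<union> (?P \<union> prod.swap ` ?P)"
    by (auto simp: image_iff)
  have "(\<Sum>a\<in>UNIV. \<Sum>b\<in>UNIV. F a b) = (\<Sum>(a,b)\<in>UNIV. F a b)"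
    by (simp add: sum.cartesian_product)
  also have "\<dots> = (\<Sum>(a,b)\<in>(\<lambda>a. (a,a)) ` UNIV. F a b) + (\<Sum>(a,b)\<in>?P. F a b)
                 + (\<Sum>(a,b)\<in>prod.swap ` ?P. F a b)"
    unfolding split by (subst sum.union_disjoint, auto)+ (simp add: add.assoc)
  also have "\<dots> = (\<Sum>a\<in>UNIV. F a a) + (\<Sum>(a,b)\<in>?P. F a b) + (\<Sum>(a,b)\<in>?P. F b a)"
    by (simp add: sum.reindex inj_on_def case_prod_unfold)
  finally show ?thesis
    by (simp add: sum.distrib case_prod_unfold add.assoc)
qed

text \<open>A diagonal term p L^k_aa L^l_aa with p L^m_aa = d_m p equals d_k p d_l p / p (also when p = 0).\<close>
lemma Re_diagonal_term:
  fixes p x y :: real and Lk Ll :: complex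
  assumes "p \<ge> 0"
    and "complex_of_real p * Lk = complex_of_real x" and "complex_of_real p * Ll = complex_of_real y"
  shows "Re (complex_of_real p * Lk * Ll) = x * y / p"
proof (cases "p = 0")
  case False
  then have "Lk = complex_of_real (x / p)" and "Ll = complex_of_real (y / p)"
    using assms(2,3) by (simp_all add: field_simps flip: of_real_mult)
  with False show ?thesis by simp
qed simp

lemma Re_off_diagonal_pair:
  fixes pa pb :: real and Lk Ll Bk Bl :: complex
  assumes "pa \<ge> 0" and "pb \<ge> 0"
    and "complex_of_real ((pa + pb) / 2) * Lk = complex_of_real (pa - pb) * Bk"
    and "complex_of_real ((pa + pb) / 2) * Ll = complex_of_real (pa - pb) * Bl"
  shows "Re (complex_of_real pa * Lk * cnj Ll + complex_of_real pb * cnj Lk * Ll)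
       = 4 * (pa - pb)^2 / (pa + pb) * Re (Bk * cnj Bl)"
proof (cases "pa + pb = 0")
  case True
  with assms(1,2) have "pa = 0" and "pb = 0" by simp_all
  then show ?thesis by simp
next
  case False
  define t where "t = 2 * (pa - pb) / (pa + pb)"
  have solve: "X = complex_of_real t * Y"
    if "complex_of_real ((pa + pb) / 2) * X = complex_of_real (pa - pb) * Y" for X Y
  proof -
    have "complex_of_real ((pa + pb) / 2) \<noteq> 0"
      using False by (simp only: of_real_eq_0_iff) simp
    with that have "X = complex_of_real (pa - pb) * Y / complex_of_real ((pa + pb) / 2)"
      by (simp add: eq_divide_eq mult.commute)
    also have "\<dots> = complex_of_real t * Y"
      by (simp add: t_def field_simps)
    finally show ?thesis .
  qed
  have "Lk = complex_of_real t * Bk" and "Ll = complex_of_real t * Bl"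
    using solve assms(3,4) by blast+
  then have "Re (complex_of_real pa * Lk * cnj Ll + complex_of_real pb * cnj Lk * Ll)
           = t^2 * (pa + pb) * Re (Bk * cnj Bl)"
    by (simp add: algebra_simps power2_eq_square)
  also have "t^2 * (pa + pb) = (2 * (pa - pb))^2 / (pa + pb)"
    using False unfolding t_def power_divide by (simp add: power2_eq_square)
  also have "\<dots> = 4 * (pa - pb)^2 / (pa + pb)"
    by (simp only: power_mult_distrib) simp
  finally show ?thesis .
qed

lemma SLD_information_pair_form:
  fixes p :: "'d::{finite,linorder} \<Rightarrow> real" and dp :: "'p \<Rightarrow> 'd \<Rightarrow> real"
    and L B :: "'p \<Rightarrow> 'd \<Rightarrow> 'd \<Rightarrow> complex"
  assumes p_nonneg: "\<And>a. p a \<ge> 0"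
    and L_hermitian: "\<And>k a b. L k b a = cnj (L k a b)"
    and sld: "\<And>k a b. complex_of_real ((p a + p b) / 2) * L k a b
        = (if a = b then complex_of_real (dp k a) else 0) + complex_of_real (p a - p b) * B k a b"
  shows "Re (\<Sum>a\<in>UNIV. \<Sum>b\<in>UNIV. complex_of_real (p a) * L k a b * L l b a)
       = (\<Sum>a\<in>UNIV. dp k a * dp l a / p a)
         + (\<Sum>(a,b)\<in>{(a,b). a < b}. 4 * (p a - p b)^2 / (p a + p b) * Re (B k a b * cnj (B l a b)))"
proof -
  have diagonal: "Re (complex_of_real (p a) * L k a a * L l a a) = dp k a * dp l a / p a" for a
  proof -
    have "complex_of_real (p a) * L m a a = complex_of_real (dp m a)" for m
      using sld[where k=m and a=a and b=a] by simp
    then show ?thesis by (intro Re_diagonal_term p_nonneg)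
  qed
  have pair: "Re (complex_of_real (p a) * L k a b * L l b a + complex_of_real (p b) * L k b a * L l a b)
      = 4 * (p a - p b)^2 / (p a + p b) * Re (B k a b * cnj (B l a b))" if "a < b" for a b
  proof -
    have "complex_of_real ((p a + p b) / 2) * L m a b = complex_of_real (p a - p b) * B m a b" for m
      using sld[where k=m and a=a and b=b] that by simp
    then show ?thesis
      unfolding L_hermitian[of _ b a] by (intro Re_off_diagonal_pair p_nonneg)
  qed
  show ?thesis
    unfolding sum_square_diag_pairs Re_sum plus_complex.sel case_prod_unfold
    using diagonal pair by (auto intro!: arg_cong2[where f="(+)"] sum.cong)
qed

lemma pair_weight_difference:
  fixes pa pb :: real
  assumes "pa \<ge> 0" and "pb \<ge> 0"
  shows "4 * (pa + pb) - 4 * (pa - pb)^2 / (pa + pb) = 16 * (pa * pb / (pa + pb))"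
proof (cases "pa + pb = 0")
  case True
  with assms have "pa = 0" and "pb = 0" by simp_all
  then show ?thesis by simp
next
  case False
  then show ?thesis by (simp add: field_simps power2_eq_square)
qed

lemma information_gap:
  fixes p :: "'d::{finite,linorder} \<Rightarrow> real" and dp :: "'p \<Rightarrow> 'd \<Rightarrow> real"
    and L B :: "'p \<Rightarrow> 'd \<Rightarrow> 'd \<Rightarrow> complex"
  assumes p_nonneg: "\<And>a. p a \<ge> 0"
    and L_hermitian: "\<And>k a b. L k b a = cnj (L k a b)"
    and sld: "\<And>k a b. complex_of_real ((p a + p b) / 2) * L k a b
        = (if a = b then complex_of_real (dp k a) else 0) + complex_of_real (p a - p b) * B k a b"
  shows "((\<Sum>i\<in>{i. p i \<noteq> 0}. 1 / p i * dp k i * dp l i)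
          + 4 * Re (\<Sum>(i,j)\<in>{(i,j). i < j}. complex_of_real (p i + p j) * B k i j * cnj (B l i j)))
         - Re (\<Sum>a\<in>UNIV. \<Sum>b\<in>UNIV. complex_of_real (p a) * L k a b * L l b a)
       = 16 * (\<Sum>(a,b)\<in>{(a,b). a < b}. p a * p b / (p a + p b) * Re (B k a b * cnj (B l a b)))"
proof -
  let ?Q = "\<lambda>a b. Re (B k a b * cnj (B l a b))"
  have classical: "(\<Sum>i\<in>{i. p i \<noteq> 0}. 1 / p i * dp k i * dp l i) = (\<Sum>a\<in>UNIV. dp k a * dp l a / p a)"
    by (rule sum.mono_neutral_cong_left) auto
  have quantum: "4 * Re (\<Sum>(i,j)\<in>{(i,j). i < j}. complex_of_real (p i + p j) * B k i j * cnj (B l i j))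
      = (\<Sum>(a,b)\<in>{(a,b). a < b}. 4 * (p a + p b) * ?Q a b)"
    unfolding Re_sum sum_distrib_left by (rule sum.cong) (auto simp: algebra_simps)
  have weights: "4 * (p a + p b) * q - 4 * (p a - p b)^2 / (p a + p b) * q
      = 16 * (p a * p b / (p a + p b) * q)" for a b and q :: real
  proof -
    have "4 * (p a + p b) * q - 4 * (p a - p b)^2 / (p a + p b) * q
        = (4 * (p a + p b) - 4 * (p a - p b)^2 / (p a + p b)) * q"
      by (simp add: left_diff_distrib)
    also have "\<dots> = 16 * (p a * p b / (p a + p b)) * q"
      by (simp only: pair_weight_difference[OF p_nonneg p_nonneg])
    finally show ?thesis by simp
  qed
  have "(\<Sum>(a,b)\<in>{(a,b). a < b}. 4 * (p a + p b) * ?Q a b)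
        - (\<Sum>(a,b)\<in>{(a,b). a < b}. 4 * (p a - p b)^2 / (p a + p b) * ?Q a b)
      = 16 * (\<Sum>(a,b)\<in>{(a,b). a < b}. p a * p b / (p a + p b) * ?Q a b)"
    unfolding sum_subtractf[symmetric] sum_distrib_left
    by (intro sum.cong refl) (simp only: case_prod_unfold weights)
  moreover have "Re (\<Sum>a\<in>UNIV. \<Sum>b\<in>UNIV. complex_of_real (p a) * L k a b * L l b a)
      = (\<Sum>a\<in>UNIV. dp k a * dp l a / p a)
        + (\<Sum>(a,b)\<in>{(a,b). a < b}. 4 * (p a - p b)^2 / (p a + p b) * ?Q a b)"
    by (rule SLD_information_pair_form[OF p_nonneg L_hermitian sld])
  ultimately show ?thesis
    unfolding classical quantum by linarith
qed

text \<open>A Gram-type form with nonnegative weights vanishes identically iff each weighted entry vanishes; the diagonal k = l gives squared moduli.\<close>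
lemma weighted_gram_sum_vanishes_iff:
  fixes r :: "'d::{finite,linorder} \<Rightarrow> 'd \<Rightarrow> real" and B :: "'p \<Rightarrow> 'd \<Rightarrow> 'd \<Rightarrow> complex"
  assumes r_nonneg: "\<And>a b. r a b \<ge> 0"
  shows "(\<forall>k l. (\<Sum>(a,b)\<in>{(a,b). a < b}. r a b * Re (B k a b * cnj (B l a b))) = 0)
     \<longleftrightarrow> (\<forall>m a b. a < b \<and> r a b \<noteq> 0 \<longrightarrow> B m a b = 0)"
proof
  assume vanish: "\<forall>k l. (\<Sum>(a,b)\<in>{(a,b). a < b}. r a b * Re (B k a b * cnj (B l a b))) = 0"
  show "\<forall>m a b. a < b \<and> r a b \<noteq> 0 \<longrightarrow> B m a b = 0"
  proof (intro allI impI)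
    fix m a b assume ab: "a < b \<and> r a b \<noteq> 0"
    have square: "Re (B m x y * cnj (B m x y)) = (cmod (B m x y))^2" for x y
      by (simp add: complex_mult_cnj cmod_power2)
    have "(\<Sum>(x,y)\<in>{(x,y). x < y}. r x y * Re (B m x y * cnj (B m x y))) = 0"
      using vanish by blast
    then have "(\<Sum>(x,y)\<in>{(x,y). x < y}. r x y * (cmod (B m x y))^2) = 0"
      by (simp only: square)
    then have "\<forall>(x,y)\<in>{(x,y). x < y}. r x y * (cmod (B m x y))^2 = 0"
      by (subst (asm) sum_nonneg_eq_0_iff) (auto simp: r_nonneg)
    with ab show "B m a b = 0" by auto
  qed
next
  assume vanish: "\<forall>m a b. a < b \<and> r a b \<noteq> 0 \<longrightarrow> B m a b = 0"
  have "r a b * Re (B k a b * cnj (B l a b)) = 0" if "a < b" for k l a b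
    using vanish that by (cases "r a b = 0") auto
  then show "\<forall>k l. (\<Sum>(a,b)\<in>{(a,b). a < b}. r a b * Re (B k a b * cnj (B l a b))) = 0"
    by (auto intro!: sum.neutral)
qed

text \<open>The weight p_a p_b/(p_a + p_b) is nonzero exactly for p_a, p_b > 0; skewness of B removes the ordering a < b.\<close>
lemma positive_pair_condition_iff:
  fixes p :: "'d::{finite,linorder} \<Rightarrow> real" and B :: "'p \<Rightarrow> 'd \<Rightarrow> 'd \<Rightarrow> complex"
  assumes p_nonneg: "\<And>a. p a \<ge> 0"
    and B_skew: "\<And>k a b. B k b a = - cnj (B k a b)"
  shows "(\<forall>m a b. a < b \<and> p a * p b / (p a + p b) \<noteq> 0 \<longrightarrow> B m a b = 0)
     \<longleftrightarrow> (\<forall>m j k. j \<noteq> k \<and> p j > 0 \<and> p k > 0 \<longrightarrow> B m j k = 0)"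
proof -
  have weight: "p a * p b / (p a + p b) \<noteq> 0 \<longleftrightarrow> p a > 0 \<and> p b > 0" for a b
    using p_nonneg[of a] p_nonneg[of b] by (auto simp: add_nonneg_eq_0_iff)
  have swap: "B m k j = 0 \<longleftrightarrow> B m j k = 0" for m j k
    using B_skew[where k=m and a=j and b=k] by auto
  show ?thesis
    unfolding weight
  proof (intro iffI allI impI)
    fix m j k
    assume ordered: "\<forall>m a b. a < b \<and> 0 < p a \<and> 0 < p b \<longrightarrow> B m a b = 0"
      and jk: "j \<noteq> k \<and> 0 < p j \<and> 0 < p k"
    then consider "j < k" | "k < j" by (metis linorder_neqE)
    then show "B m j k = 0"
      using ordered jk swap by cases blast+
  qed auto
qed

lemma information_matrices_equal_iff:
  fixes p :: "'d::{finite,linorder} \<Rightarrow> real" and dp :: "'p \<Rightarrow> 'd \<Rightarrow> real"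
    and L B :: "'p \<Rightarrow> 'd \<Rightarrow> 'd \<Rightarrow> complex"
  assumes p_nonneg: "\<And>a. p a \<ge> 0"
    and B_skew: "\<And>k a b. B k b a = - cnj (B k a b)"
    and L_hermitian: "\<And>k a b. L k b a = cnj (L k a b)"
    and sld: "\<And>k a b. complex_of_real ((p a + p b) / 2) * L k a b
        = (if a = b then complex_of_real (dp k a) else 0) + complex_of_real (p a - p b) * B k a b"
  shows "(\<forall>k l. Re (\<Sum>a\<in>UNIV. \<Sum>b\<in>UNIV. complex_of_real (p a) * L k a b * L l b a)
            = (\<Sum>i\<in>{i. p i \<noteq> 0}. 1 / p i * dp k i * dp l i)
              + 4 * Re (\<Sum>(i,j)\<in>{(i,j). i < j}. complex_of_real (p i + p j) * B k i j * cnj (B l i j)))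
     \<longleftrightarrow> (\<forall>m j k. j \<noteq> k \<and> p j > 0 \<and> p k > 0 \<longrightarrow> B m j k = 0)"
proof -
  have weight_nonneg: "p a * p b / (p a + p b) \<ge> 0" for a b
    using p_nonneg[of a] p_nonneg[of b] by simp
  have gap_iff: "(Re (\<Sum>a\<in>UNIV. \<Sum>b\<in>UNIV. complex_of_real (p a) * L k a b * L l b a)
            = (\<Sum>i\<in>{i. p i \<noteq> 0}. 1 / p i * dp k i * dp l i)
              + 4 * Re (\<Sum>(i,j)\<in>{(i,j). i < j}. complex_of_real (p i + p j) * B k i j * cnj (B l i j)))
     \<longleftrightarrow> (\<Sum>(a,b)\<in>{(a,b). a < b}. p a * p b / (p a + p b) * Re (B k a b * cnj (B l a b))) = 0" for k l
  proof -
    have "((\<Sum>i\<in>{i. p i \<noteq> 0}. 1 / p i * dp k i * dp l i)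
          + 4 * Re (\<Sum>(i,j)\<in>{(i,j). i < j}. complex_of_real (p i + p j) * B k i j * cnj (B l i j)))
         - Re (\<Sum>a\<in>UNIV. \<Sum>b\<in>UNIV. complex_of_real (p a) * L k a b * L l b a)
       = 16 * (\<Sum>(a,b)\<in>{(a,b). a < b}. p a * p b / (p a + p b) * Re (B k a b * cnj (B l a b)))"
      by (rule information_gap[OF p_nonneg L_hermitian sld])
    then show ?thesis by arith
  qed
  have "(\<forall>k l. Re (\<Sum>a\<in>UNIV. \<Sum>b\<in>UNIV. complex_of_real (p a) * L k a b * L l b a)
            = (\<Sum>i\<in>{i. p i \<noteq> 0}. 1 / p i * dp k i * dp l i)
              + 4 * Re (\<Sum>(i,j)\<in>{(i,j). i < j}. complex_of_real (p i + p j) * B k i j * cnj (B l i j)))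
     \<longleftrightarrow> (\<forall>k l. (\<Sum>(a,b)\<in>{(a,b). a < b}. p a * p b / (p a + p b) * Re (B k a b * cnj (B l a b))) = 0)"
    by (simp only: gap_iff)
  also have "\<dots> \<longleftrightarrow> (\<forall>m j k. j \<noteq> k \<and> p j > 0 \<and> p k > 0 \<longrightarrow> B m j k = 0)"
    unfolding weighted_gram_sum_vanishes_iff[OF weight_nonneg]
    by (rule positive_pair_condition_iff[OF p_nonneg B_skew])
  finally show ?thesis .
qed

section \<open>The quantum family in its eigenbasis\<close>

lemma SLD_equation_in_eigenbasis:
  assumes ortho: "orthonormal_family (\<lambda>a. w a t)"
    and diff_w: "\<And>k. w k differentiable (at t)" and diff_pr: "\<And>k. pr k differentiable (at t)"
    and skew: "\<And>a b. braket (w a t) (pderiv_at (w b) m t) = - braket (pderiv_at (w a) m t) (w b t)"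
    and "is_SLD_family (dens pr w) t lam"
  shows "complex_of_real ((pr a t + pr b t) / 2) * braket (w a t) (lam m *v w b t)
       = (if a = b then complex_of_real (pderiv_at (pr a) m t) else 0)
         + complex_of_real (pr a t - pr b t) * braket (pderiv_at (w a) m t) (w b t)"
proof -
  have "pderiv_at (dens pr w) m t = (1/2::real) *\<^sub>R (dens pr w t ** lam m + lam m ** dens pr w t)"
    using assms(5) unfolding is_SLD_family_def by blast
  then have "complex_of_real ((pr a t + pr b t) / 2) * braket (w a t) (lam m *v w b t)
      = braket (w a t) (pderiv_at (dens pr w) m t *v w b t)"
    unfolding dens_as_ketbra_sum by (simp add: matrix_element_SLD_equation[OF ortho])
  also have "\<dots> = (if a = b then complex_of_real (pderiv_at (pr a) m t) else 0)
         + complex_of_real (pr a t - pr b t) * braket (pderiv_at (w a) m t) (w b t)"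
    unfolding pderiv_dens[OF diff_w diff_pr] by (rule matrix_element_ketbra_derivative[OF ortho skew])
  finally show ?thesis .
qed

lemma SLD_info_in_eigenbasis:
  assumes "orthonormal_family (\<lambda>a. w a t)"
  shows "SLD_info (dens pr w t) lam k l
       = Re (\<Sum>a\<in>UNIV. \<Sum>b\<in>UNIV. complex_of_real (pr a t)
               * braket (w a t) (lam k *v w b t) * braket (w b t) (lam l *v w a t))"
  unfolding SLD_info_def dens_as_ketbra_sum trace_in_orthonormal_basis[OF assms] ..

text \<open>C_L written with B^l_ij = <d_l w_i|w_j> in both factors.\<close>
lemma CL_info_in_eigenbasis:
  "CL_info pr w t k l
     = (\<Sum>i\<in>{i. pr i t \<noteq> 0}. 1 / pr i t * pderiv_at (pr i) k t * pderiv_at (pr i) l t)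
       + 4 * Re (\<Sum>(i,j)\<in>{(i,j). i < j}. complex_of_real (pr i t + pr j t)
            * braket (pderiv_at (w i) k t) (w j t) * cnj (braket (pderiv_at (w i) l t) (w j t)))"
  unfolding CL_info_def braket_cnj[of "w _ t"] ..

theorem lemma7:
  fixes \<Theta> :: "(real^'p) set"
    and pr :: "'d::{finite,linorder} \<Rightarrow> real^'p \<Rightarrow> real"
    and w :: "'d \<Rightarrow> real^'p \<Rightarrow> (complex, 'd::{finite,linorder}) vec"
    and \<theta> :: "real^'p"
    and lam :: "'p \<Rightarrow> ((complex, 'd::{finite,linorder}) vec, 'd::{finite,linorder}) vec"
  assumes "open \<Theta>"
    and "\<And>k. smooth_on \<Theta> (pr k)"
    and "\<And>k x. x \<in> \<Theta> \<Longrightarrow> 0 \<le> pr k x \<and> pr k x \<le> 1"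
    and "\<And>x. x \<in> \<Theta> \<Longrightarrow> (\<Sum>k\<in>UNIV. pr k x) = 1"
    and "\<And>k. smooth_on \<Theta> (w k)"
    and "\<And>j k x. x \<in> \<Theta> \<Longrightarrow> braket (w j x) (w k x) = (if j = k then 1 else 0)"
    and "\<theta> \<in> \<Theta>"
    and "is_SLD_family (dens pr w) \<theta> lam"
  shows "(\<forall>k l. SLD_info (dens pr w \<theta>) lam k l = CL_info pr w \<theta> k l) \<longleftrightarrow>
         (\<forall>m j k. j \<noteq> k \<and> pr j \<theta> > 0 \<and> pr k \<theta> > 0 \<longrightarrow>
            braket (pderiv_at (w j) m \<theta>) (w k \<theta>) = 0)"
proof -
  have diff_w: "w k differentiable (at \<theta>)" and diff_pr: "pr k differentiable (at \<theta>)" for k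
    using smooth_on_differentiable assms(2,5,7) by blast+
  have ortho: "orthonormal_family (\<lambda>a. w a \<theta>)"
    unfolding orthonormal_family_def using assms(6,7) by blast
  have skew: "braket (w a \<theta>) (pderiv_at (w b) m \<theta>) = - braket (pderiv_at (w a) m \<theta>) (w b \<theta>)"
    for m a b
    using pderiv_braket_orthonormality[OF diff_w assms(1,7) assms(6)]
    by (simp add: eq_neg_iff_add_eq_0 add.commute)
  show ?thesis
    unfolding SLD_info_in_eigenbasis[where w=w and t=\<theta>, OF ortho] CL_info_in_eigenbasis
  proof (rule information_matrices_equal_iff)
    show "pr a \<theta> \<ge> 0" for a
      using assms(3,7) by blast
    show "braket (pderiv_at (w b) m \<theta>) (w a \<theta>) = - cnj (braket (pderiv_at (w a) m \<theta>) (w b \<theta>))"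
      for m a b
      using braket_cnj[of "pderiv_at (w b) m \<theta>" "w a \<theta>"] skew[of a b m] by simp
    show "braket (w b \<theta>) (lam k *v w a \<theta>) = cnj (braket (w a \<theta>) (lam k *v w b \<theta>))" for k a b
      using assms(8) unfolding is_SLD_family_def by (blast intro: braket_hermitian)
    show "complex_of_real ((pr a \<theta> + pr b \<theta>) / 2) * braket (w a \<theta>) (lam k *v w b \<theta>)
        = (if a = b then complex_of_real (pderiv_at (pr a) k \<theta>) else 0)
          + complex_of_real (pr a \<theta> - pr b \<theta>) * braket (pderiv_at (w a) k \<theta>) (w b \<theta>)" for k a b
      by (rule SLD_equation_in_eigenbasis[OF ortho diff_w diff_pr skew assms(8)])
  qed
qed

end
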